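(* Let $\pi^0,\pi^1,\gamma>0$, $\mathrm{E}^{\mathrm{bau}}=\bm{q^{\mathrm{bau}}}=\pi^0/\pi^1$, $\mathcal{W}^{\mathrm{bau}}_{\mathrm{C}}=(\pi^0)^2/(2\pi^1)$, $\varrho=1/\pi^1+1/\gamma$, and let $\tau,\lambda>0$ satisfy $\tau\varrho<\mathrm{E}^{\mathrm{bau}}$ and $\lambda\varrho<\mathrm{E}^{\mathrm{bau}}$. Let $0<P<\lambda$. (Tax) The wealth $\pi(q)-c(q,a)-\tau e^{-a}q$ is maximized at $\bm{q^{\mathrm{tax}}}=\bm{q^{\mathrm{bau}}}-\tau/\pi^1$ and $e^{-\bm{a^{\mathrm{tax}}}}=(\mathrm{E}^{\mathrm{bau}}-\tau\varrho)/\bm{q^{\mathrm{tax}}}$, with resulting emissions $\mathrm{E}^{\mathrm{tax}}=e^{-\bm{a^{\mathrm{tax}}}}\bm{q^{\mathrm{tax}}}=\mathrm{E}^{\mathrm{bau}}-\tau\varrho$ and wealth $\mathcal{W}^{\mathrm{tax}}_{\mathrm{C}}=\mathcal{W}^{\mathrm{bau}}_{\mathrm{C}}-\tau(\mathrm{E}^{\mathrm{bau}}-\tfrac\tau2\varrho)$. (Market) The wealth $\pi(q)-c(q,a)-\delta P-\lambda(qe^{-a}-\delta)^+$ is maximized at $\bm{q^{\mathrm{mar}}}=\bm{q^{\mathrm{bau}}}-P/\pi^1$, $e^{-\bm{a^{\mathrm{mar}}}}=(\mathrm{E}^{\mathrm{bau}}-P\varrho)/\bm{q^{\mathrm{mar}}}$,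 $\bm\delta=\mathrm{E}^{\mathrm{bau}}-P\varrho$, with resulting emissions $\mathrm{E}^{\mathrm{mar}}=\mathrm{E}^{\mathrm{bau}}-P\varrho=\bm\delta$ and wealth $\mathcal{W}^{\mathrm{mar}}_{\mathrm{C}}=\mathcal{W}^{\mathrm{bau}}_{\mathrm{C}}-P(\mathrm{E}^{\mathrm{bau}}-\tfrac P2\varrho)$.
   Context: A company producing $q$ units has raw wealth $\pi(q)=\pi^0q-\tfrac{\pi^1}{2}q^2$; its carbon emissions equal $q$, reduced to $e^{-a}q$ by a green technology effort $a$ at cost $c(q,a)=\tfrac\gamma2[(1-e^{-a})q]^2$. Under the tax scheme a tax $\tau$ is paid per unit of emission; under the market scheme the company buys $\delta$ certificates at unit price $P$ and pays a penalty $\lambda$ per unit of emission exceeding $\delta$. The company maximizes its wealth over its decision variables ($q,a$ under tax; $q,a,\delta$ under market), subject to production and wealth being positive. $\mathrm{E}^{\mathrm{bau}},\bm{q^{\mathrm{bau}}},\mathcal{W}^{\mathrm{bau}}_{\mathrm{C}}$ are the business-as-usual (unconstrained) emissions, production and wealth. *)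

theory Defs
  imports Complex_Main
begin

definition raw_wealth :: "real \<Rightarrow> real \<Rightarrow> real \<Rightarrow> real" where
  "raw_wealth pi0 pi1 q = pi0 * q - pi1 / 2 * q ^ 2"

definition green_cost :: "real \<Rightarrow> real \<Rightarrow> real \<Rightarrow> real" where
  "green_cost gamma q a = gamma / 2 * ((1 - exp (- a)) * q) ^ 2"

definition wealth_tax :: "real \<Rightarrow> real \<Rightarrow> real \<Rightarrow> real \<Rightarrow> real \<times> real \<Rightarrow> real" where
  "wealth_tax pi0 pi1 gamma tau qa =
     (case qa of (q, a) \<Rightarrow> raw_wealth pi0 pi1 q - green_cost gamma q a - tau * exp (- a) * q)"

definition feasible_tax :: "real \<Rightarrow> real \<Rightarrow> real \<Rightarrow> real \<Rightarrow> real \<times> real \<Rightarrow> bool" where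
  "feasible_tax pi0 pi1 gamma tau qa =
     (fst qa > 0 \<and> snd qa \<ge> 0 \<and> wealth_tax pi0 pi1 gamma tau qa > 0)"

definition wealth_mar :: "real \<Rightarrow> real \<Rightarrow> real \<Rightarrow> real \<Rightarrow> real \<Rightarrow> real \<times> real \<times> real \<Rightarrow> real" where
  "wealth_mar pi0 pi1 gamma P lam qad =
     (case qad of (q, a, d) \<Rightarrow>
        raw_wealth pi0 pi1 q - green_cost gamma q a - d * P - lam * max 0 (q * exp (- a) - d))"

definition feasible_mar :: "real \<Rightarrow> real \<Rightarrow> real \<Rightarrow> real \<Rightarrow> real \<Rightarrow> real \<times> real \<times> real \<Rightarrow> bool" where
  "feasible_mar pi0 pi1 gamma P lam qad =
     (case qad of (q, a, d) \<Rightarrow>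
        q > 0 \<and> a \<ge> 0 \<and> d \<ge> 0 \<and> wealth_mar pi0 pi1 gamma P lam qad > 0)"

end

theory Submission
  imports Defs
begin

text \<open>In terms of production q and emissions E = exp(-a) q the wealth under a carbon price t is
  the concave quadratic pi0 q - pi1/2 q^2 - gamma/2 (q - E)^2 - t E. Completing the square
  gives its maximum, attained at q = (pi0 - t)/pi1 and E = q - t/gamma, and a nonnegative
  effort realises this E. Under the market scheme, since P < lambda, certificates and
  penalty together cost at least P E, with equality when exactly E certificates are bought;
  so the market problem is dominated by the tax problem with t = P and has the same optimum.\<close>

definition emission_wealth :: "real \<Rightarrow> real \<Rightarrow> real \<Rightarrow> real \<Rightarrow> real \<Rightarrow> real \<Rightarrow> real" where
  "emission_wealth pi0 pi1 gamma t q E = raw_wealth pi0 pi1 q - gamma / 2 * (q - E) ^ 2 - t * E"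

definition opt_production :: "real \<Rightarrow> real \<Rightarrow> real \<Rightarrow> real" where
  "opt_production pi0 pi1 t = pi0 / pi1 - t / pi1"

definition opt_emissions :: "real \<Rightarrow> real \<Rightarrow> real \<Rightarrow> real \<Rightarrow> real" where
  "opt_emissions pi0 pi1 gamma t = pi0 / pi1 - t * (1 / pi1 + 1 / gamma)"

definition opt_wealth :: "real \<Rightarrow> real \<Rightarrow> real \<Rightarrow> real \<Rightarrow> real" where
  "opt_wealth pi0 pi1 gamma t = pi0 ^ 2 / (2 * pi1) - t * (pi0 / pi1 - t / 2 * (1 / pi1 + 1 / gamma))"

lemma wealth_tax_eq_emission_wealth:
  "wealth_tax pi0 pi1 gamma t (q, a) = emission_wealth pi0 pi1 gamma t q (exp (- a) * q)"
  unfolding wealth_tax_def emission_wealth_def green_cost_def by (simp add: algebra_simps)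

lemma certificate_cost_ge:
  fixes P lam E d :: real
  assumes "0 \<le> P" "P \<le> lam"
  shows "P * E \<le> d * P + lam * max 0 (E - d)"
proof (cases "E \<le> d")
  case True
  then have "P * E \<le> P * d" using assms by (intro mult_left_mono)
  then show ?thesis using True by (simp add: mult.commute)
next
  case False
  then have "P * (E - d) \<le> lam * (E - d)" using assms by (intro mult_right_mono) auto
  then show ?thesis using False by (simp add: algebra_simps)
qed

lemma wealth_mar_le_emission_wealth:
  assumes "0 \<le> P" "P \<le> lam"
  shows "wealth_mar pi0 pi1 gamma P lam (q, a, d) \<le> emission_wealth pi0 pi1 gamma P q (exp (- a) * q)"
  using certificate_cost_ge[OF assms, of "exp (- a) * q" d]
  unfolding wealth_mar_def emission_wealth_def green_cost_def by (simp add: algebra_simps)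

lemma wealth_mar_eq_emission_wealth:
  "wealth_mar pi0 pi1 gamma P lam (q, a, exp (- a) * q) = emission_wealth pi0 pi1 gamma P q (exp (- a) * q)"
  unfolding wealth_mar_def emission_wealth_def green_cost_def by (simp add: algebra_simps)

lemma emission_wealth_completed_square:
  assumes "pi1 \<noteq> 0" "gamma \<noteq> 0"
  shows "emission_wealth pi0 pi1 gamma t q E = opt_wealth pi0 pi1 gamma t
    - pi1 / 2 * (q - opt_production pi0 pi1 t) ^ 2 - gamma / 2 * (q - E - t / gamma) ^ 2"
  using assms unfolding emission_wealth_def raw_wealth_def opt_wealth_def opt_production_def
  by (simp add: field_simps power2_eq_square)

lemma emission_wealth_le_opt_wealth:
  assumes "pi1 > 0" "gamma > 0"
  shows "emission_wealth pi0 pi1 gamma t q E \<le> opt_wealth pi0 pi1 gamma t"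
proof -
  have "pi1 / 2 * (q - opt_production pi0 pi1 t) ^ 2 \<ge> 0" "gamma / 2 * (q - E - t / gamma) ^ 2 \<ge> 0"
    using assms by simp_all
  with emission_wealth_completed_square[of pi1 gamma pi0 t q E] assms show ?thesis by linarith
qed

lemma opt_production_eq:
  assumes "gamma \<noteq> 0"
  shows "opt_production pi0 pi1 t = opt_emissions pi0 pi1 gamma t + t / gamma"
  using assms unfolding opt_production_def opt_emissions_def by (simp add: algebra_simps)

lemma emission_wealth_at_optimum:
  assumes "pi1 \<noteq> 0" "gamma \<noteq> 0"
  shows "emission_wealth pi0 pi1 gamma t (opt_production pi0 pi1 t) (opt_emissions pi0 pi1 gamma t)
    = opt_wealth pi0 pi1 gamma t"
  using emission_wealth_completed_square[OF assms] opt_production_eq[OF assms(2)] by simp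

lemma opt_wealth_pos:
  assumes "pi1 > 0" "gamma > 0" "t \<noteq> 0"
  shows "opt_wealth pi0 pi1 gamma t > 0"
proof -
  have "opt_wealth pi0 pi1 gamma t = (pi0 - t) ^ 2 / (2 * pi1) + t ^ 2 / (2 * gamma)"
    using assms unfolding opt_wealth_def by (simp add: field_simps power2_eq_square)
  moreover have "(pi0 - t) ^ 2 / (2 * pi1) \<ge> 0" "t ^ 2 / (2 * gamma) > 0"
    using assms by auto
  ultimately show ?thesis by linarith
qed

lemma exists_effort:
  fixes E q :: real
  assumes "0 < E" "E \<le> q"
  obtains a where "a \<ge> 0" "exp (- a) = E / q"
proof
  show "ln (q / E) \<ge> 0" "exp (- ln (q / E)) = E / q"
    using assms by (simp_all add: exp_minus)
qed

lemma opt_effort: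
  assumes "gamma > 0" "t > 0" "opt_emissions pi0 pi1 gamma t > 0"
  obtains a where "a \<ge> 0" "opt_production pi0 pi1 t > 0"
    "exp (- a) = opt_emissions pi0 pi1 gamma t / opt_production pi0 pi1 t"
    "exp (- a) * opt_production pi0 pi1 t = opt_emissions pi0 pi1 gamma t"
proof -
  have "t / gamma > 0" using assms by simp
  then have q_ge: "opt_production pi0 pi1 t \<ge> opt_emissions pi0 pi1 gamma t"
    using opt_production_eq[of gamma pi0 pi1 t] assms by simp
  then have q_pos: "opt_production pi0 pi1 t > 0" using assms(3) by linarith
  obtain a where "a \<ge> 0" "exp (- a) = opt_emissions pi0 pi1 gamma t / opt_production pi0 pi1 t"
    using exists_effort[OF assms(3) q_ge] .
  with q_pos show ?thesis using that by simp
qed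

lemma wealth_tax_optimum:
  assumes "pi1 > 0" "gamma > 0" "t > 0" "opt_emissions pi0 pi1 gamma t > 0"
  shows "\<exists>a. exp (- a) = opt_emissions pi0 pi1 gamma t / opt_production pi0 pi1 t
    \<and> is_arg_max (wealth_tax pi0 pi1 gamma t) (feasible_tax pi0 pi1 gamma t) (opt_production pi0 pi1 t, a)
    \<and> exp (- a) * opt_production pi0 pi1 t = opt_emissions pi0 pi1 gamma t
    \<and> wealth_tax pi0 pi1 gamma t (opt_production pi0 pi1 t, a) = opt_wealth pi0 pi1 gamma t"
proof -
  obtain a where a: "a \<ge> 0" "opt_production pi0 pi1 t > 0"
    "exp (- a) = opt_emissions pi0 pi1 gamma t / opt_production pi0 pi1 t"
    and emissions: "exp (- a) * opt_production pi0 pi1 t = opt_emissions pi0 pi1 gamma t"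
    using opt_effort[OF assms(2-4)] .
  have attained: "wealth_tax pi0 pi1 gamma t (opt_production pi0 pi1 t, a) = opt_wealth pi0 pi1 gamma t"
    using assms by (simp add: wealth_tax_eq_emission_wealth emissions emission_wealth_at_optimum)
  have "is_arg_max (wealth_tax pi0 pi1 gamma t) (feasible_tax pi0 pi1 gamma t) (opt_production pi0 pi1 t, a)"
    unfolding is_arg_max_linorder feasible_tax_def
    using a attained opt_wealth_pos[OF assms(1,2)] assms
    by (auto simp: wealth_tax_eq_emission_wealth emission_wealth_le_opt_wealth)
  with a emissions attained show ?thesis by blast
qed

lemma wealth_mar_optimum:
  assumes "pi1 > 0" "gamma > 0" "0 < P" "P \<le> lam" "opt_emissions pi0 pi1 gamma P > 0"
  shows "\<exists>a. exp (- a) = opt_emissions pi0 pi1 gamma P / opt_production pi0 pi1 P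
    \<and> is_arg_max (wealth_mar pi0 pi1 gamma P lam) (feasible_mar pi0 pi1 gamma P lam)
        (opt_production pi0 pi1 P, a, opt_emissions pi0 pi1 gamma P)
    \<and> exp (- a) * opt_production pi0 pi1 P = opt_emissions pi0 pi1 gamma P
    \<and> wealth_mar pi0 pi1 gamma P lam (opt_production pi0 pi1 P, a, opt_emissions pi0 pi1 gamma P)
        = opt_wealth pi0 pi1 gamma P"
proof -
  obtain a where a: "a \<ge> 0" "opt_production pi0 pi1 P > 0"
    "exp (- a) = opt_emissions pi0 pi1 gamma P / opt_production pi0 pi1 P"
    and emissions: "exp (- a) * opt_production pi0 pi1 P = opt_emissions pi0 pi1 gamma P"
    using opt_effort[OF assms(2,3,5)] .
  have attained: "wealth_mar pi0 pi1 gamma P lam (opt_production pi0 pi1 P, a, opt_emissions pi0 pi1 gamma P)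
      = opt_wealth pi0 pi1 gamma P"
    using wealth_mar_eq_emission_wealth[of pi0 pi1 gamma P lam "opt_production pi0 pi1 P" a] assms
    by (simp add: emissions emission_wealth_at_optimum)
  have "wealth_mar pi0 pi1 gamma P lam (q, b, d) \<le> opt_wealth pi0 pi1 gamma P" for q b d
    using wealth_mar_le_emission_wealth[of P lam] emission_wealth_le_opt_wealth assms
    by (meson less_imp_le order_trans)
  then have "is_arg_max (wealth_mar pi0 pi1 gamma P lam) (feasible_mar pi0 pi1 gamma P lam)
      (opt_production pi0 pi1 P, a, opt_emissions pi0 pi1 gamma P)"
    unfolding is_arg_max_linorder feasible_mar_def
    using a attained opt_wealth_pos[OF assms(1,2)] assms by auto
  with a emissions attained show ?thesis by blast
qed

theorem proposition2p3:
  fixes pi0 pi1 gamma tau lam P :: real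
  assumes pos: "pi0 > 0" "pi1 > 0" "gamma > 0" "tau > 0" "lam > 0"
    and Ebau_def: "Ebau = pi0 / pi1"
    and qbau_def: "qbau = pi0 / pi1"
    and Wbau_def: "Wbau = pi0 ^ 2 / (2 * pi1)"
    and rho_def: "rho = 1 / pi1 + 1 / gamma"
    and tau_small: "tau * rho < Ebau"
    and lam_small: "lam * rho < Ebau"
    and P_bounds: "0 < P" "P < lam"
  shows
    "(\<exists>a. exp (- a) = (Ebau - tau * rho) / (qbau - tau / pi1)
          \<and> is_arg_max (wealth_tax pi0 pi1 gamma tau) (feasible_tax pi0 pi1 gamma tau)
               (qbau - tau / pi1, a)
          \<and> exp (- a) * (qbau - tau / pi1) = Ebau - tau * rho
          \<and> wealth_tax pi0 pi1 gamma tau (qbau - tau / pi1, a)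
              = Wbau - tau * (Ebau - tau / 2 * rho))
     \<and> (\<exists>a. exp (- a) = (Ebau - P * rho) / (qbau - P / pi1)
          \<and> is_arg_max (wealth_mar pi0 pi1 gamma P lam) (feasible_mar pi0 pi1 gamma P lam)
               (qbau - P / pi1, a, Ebau - P * rho)
          \<and> exp (- a) * (qbau - P / pi1) = Ebau - P * rho
          \<and> wealth_mar pi0 pi1 gamma P lam (qbau - P / pi1, a, Ebau - P * rho)
              = Wbau - P * (Ebau - P / 2 * rho))"
proof -
  have "rho > 0" using pos rho_def by (simp add: add_pos_pos)
  then have "P * rho < lam * rho" using P_bounds by simp
  then have P_small: "P * rho < Ebau" using lam_small by linarith
  show ?thesis
    using wealth_tax_optimum[OF pos(2-4), of pi0] tau_small
      wealth_mar_optimum[OF pos(2,3) P_bounds(1) less_imp_le[OF P_bounds(2)], of pi0] P_small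
    unfolding Ebau_def qbau_def Wbau_def rho_def opt_production_def opt_emissions_def opt_wealth_def
    by simp
qed

end
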